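(* For every ideal $\mathcal I$ on $\omega$ and every cardinal $\kappa$, each of the classes $(\mathcal I\text{-p},\mathcal I\text{-}\sigma\text{-u})$, $(\mathcal I\text{-p},\mathcal I\text{-qn})$ and $(\mathcal I\text{-qn},\mathcal I\text{-}\sigma\text{-u})$ contains a space of cardinality $\kappa$.
   Context: An ideal on $\omega$ is a family $\mathcal I\subseteq\mathcal P(\omega)$ closed under finite unions and subsets, containing all finite sets, with $\omega\notin\mathcal I$. A real sequence $(a_n)$ is $\mathcal I$-convergent to $0$ if $\{n:|a_n|\ge\varepsilon\}\in\mathcal I$ for all $\varepsilon>0$. For a sequence $(f_n)$ of real functions on a set $X$: $\mathcal I$-p means $(f_n(x))$ is $\mathcal I$-convergent to $0$ for each $x$; $\mathcal I$-u means $\{n:\exists x\in X\,(|f_n(x)|\ge\varepsilon)\}\in\mathcal I$ for each $\varepsilon>0$; $\mathcal I$-$\sigma$-u means $X=\bigcup_{k\in\omega}X_k$ with $(f_n\restriction X_k)$ $\mathcal I$-u convergent to $0$ for each $k$; $\mathcal I$-qn means there is a sequence $(\varepsilon_n)$ of positive reals $\mathcal I$-convergent to $0$ with $\{n:|f_n(x)|\ge\varepsilon_n\}\in\mathcal I$ for each $x$. $\mathcal C(X)$ = continuous real functions on $X$. Normal space = Hausdorff space in which disjoint closed sets have disjoint open neighbourhoods. $(\alpha,\beta)$ is the class of normal spaces $X$ such that for all sequences $(f_n)$ in $\mathcal C(X)$, $f_n\to0$ in sense $\alpha$ iff in sense $\beta$. *)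

theory Defs
  imports "HOL-Analysis.Analysis" "HOL-Library.Equipollence"
begin

definition ideal_on :: "nat set set \<Rightarrow> bool" where
  "ideal_on I \<equiv> (\<forall>A\<in>I. \<forall>B\<in>I. A \<union> B \<in> I) \<and> (\<forall>A\<in>I. \<forall>B. B \<subseteq> A \<longrightarrow> B \<in> I)
     \<and> (\<forall>A. finite A \<longrightarrow> A \<in> I) \<and> UNIV \<notin> I"

definition I_conv0 :: "nat set set \<Rightarrow> (nat \<Rightarrow> real) \<Rightarrow> bool" where
  "I_conv0 I a \<equiv> \<forall>\<epsilon>>0. {n. \<bar>a n\<bar> \<ge> \<epsilon>} \<in> I"

definition I_p :: "nat set set \<Rightarrow> 'a set \<Rightarrow> (nat \<Rightarrow> 'a \<Rightarrow> real) \<Rightarrow> bool" where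
  "I_p I S f \<equiv> \<forall>x\<in>S. I_conv0 I (\<lambda>n. f n x)"

definition I_u :: "nat set set \<Rightarrow> 'a set \<Rightarrow> (nat \<Rightarrow> 'a \<Rightarrow> real) \<Rightarrow> bool" where
  "I_u I S f \<equiv> \<forall>\<epsilon>>0. {n. \<exists>x\<in>S. \<bar>f n x\<bar> \<ge> \<epsilon>} \<in> I"

definition I_sigma_u :: "nat set set \<Rightarrow> 'a set \<Rightarrow> (nat \<Rightarrow> 'a \<Rightarrow> real) \<Rightarrow> bool" where
  "I_sigma_u I S f \<equiv> \<exists>Xk :: nat \<Rightarrow> 'a set. S = (\<Union>k. Xk k) \<and> (\<forall>k. I_u I (Xk k) f)"

definition I_qn :: "nat set set \<Rightarrow> 'a set \<Rightarrow> (nat \<Rightarrow> 'a \<Rightarrow> real) \<Rightarrow> bool" where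
  "I_qn I S f \<equiv> \<exists>e :: nat \<Rightarrow> real. (\<forall>n. e n > 0) \<and> I_conv0 I e
      \<and> (\<forall>x\<in>S. {n. \<bar>f n x\<bar> \<ge> e n} \<in> I)"

definition normal_T2 :: "'a topology \<Rightarrow> bool" where
  "normal_T2 X \<equiv> Hausdorff_space X \<and> normal_space X"

definition in_class ::
  "(nat set set \<Rightarrow> 'a set \<Rightarrow> (nat \<Rightarrow> 'a \<Rightarrow> real) \<Rightarrow> bool) \<Rightarrow>
   (nat set set \<Rightarrow> 'a set \<Rightarrow> (nat \<Rightarrow> 'a \<Rightarrow> real) \<Rightarrow> bool) \<Rightarrow>
   nat set set \<Rightarrow> 'a topology \<Rightarrow> bool" where
  "in_class \<alpha> \<beta> I X \<equiv> normal_T2 X \<and>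
     (\<forall>f :: nat \<Rightarrow> 'a \<Rightarrow> real. (\<forall>n. continuous_map X euclideanreal (f n)) \<longrightarrow>
        (\<alpha> I (topspace X) f \<longleftrightarrow> \<beta> I (topspace X) f))"

end

theory Submission
  imports Defs
begin

(* On K fix a point p and let the open sets be the subsets of K that either miss p or have
   countable complement in K. This space is normal and Hausdorff, and a continuous real function
   is constant (equal to its value at p) off a countable set. So for a sequence of continuous
   functions, K splits into the points where every f n agrees with f n p and countably many
   singletons; on each piece pointwise I-convergence is already uniform, i.e. I-p implies
   I-sigma-u. For every ideal, I-sigma-u implies I-qn and I-qn implies I-p, so on this space all
   three modes of convergence coincide. *)

lemma ideal_on_subset: "ideal_on I \<Longrightarrow> A \<in> I \<Longrightarrow> B \<subseteq> A \<Longrightarrow> B \<in> I"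
  unfolding ideal_on_def by blast

lemma ideal_on_Un: "ideal_on I \<Longrightarrow> A \<in> I \<Longrightarrow> B \<in> I \<Longrightarrow> A \<union> B \<in> I"
  unfolding ideal_on_def by blast

lemma ideal_on_finite: "ideal_on I \<Longrightarrow> finite A \<Longrightarrow> A \<in> I"
  unfolding ideal_on_def by blast

lemma ideal_on_subset_Un_finite:
  assumes "ideal_on I" "A \<in> I" "finite F" "B \<subseteq> A \<union> F"
  shows "B \<in> I"
  using assms ideal_on_subset ideal_on_Un ideal_on_finite by metis

lemma I_qn_imp_I_p:
  assumes I: "ideal_on I" and "I_qn I S f"
  shows "I_p I S f"
proof -
  obtain e where e: "I_conv0 I e" and below: "\<forall>x\<in>S. {n. \<bar>f n x\<bar> \<ge> e n} \<in> I"
    using assms(2) unfolding I_qn_def by blast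
  show ?thesis
    unfolding I_p_def I_conv0_def
  proof (intro ballI allI impI)
    fix x and \<epsilon> :: real
    assume "x \<in> S" "\<epsilon> > 0"
    then have "{n. \<bar>f n x\<bar> \<ge> e n} \<union> {n. \<bar>e n\<bar> \<ge> \<epsilon>} \<in> I"
      using e below ideal_on_Un[OF I] unfolding I_conv0_def by blast
    moreover have "{n. \<bar>f n x\<bar> \<ge> \<epsilon>} \<subseteq> {n. \<bar>f n x\<bar> \<ge> e n} \<union> {n. \<bar>e n\<bar> \<ge> \<epsilon>}"
      by auto
    ultimately show "{n. \<bar>f n x\<bar> \<ge> \<epsilon>} \<in> I"
      by (rule ideal_on_subset[OF I])
  qed
qed

lemma I_sigma_u_imp_I_p:
  assumes I: "ideal_on I" and "I_sigma_u I S f"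
  shows "I_p I S f"
  unfolding I_p_def I_conv0_def
proof (intro ballI allI impI)
  fix x and \<epsilon> :: real
  assume "x \<in> S" "\<epsilon> > 0"
  then obtain A where "x \<in> A" "I_u I A f"
    using assms(2) unfolding I_sigma_u_def by blast
  then have "{n. \<exists>y\<in>A. \<bar>f n y\<bar> \<ge> \<epsilon>} \<in> I"
    using \<open>\<epsilon> > 0\<close> unfolding I_u_def by blast
  then show "{n. \<bar>f n x\<bar> \<ge> \<epsilon>} \<in> I"
    by (rule ideal_on_subset[OF I]) (use \<open>x \<in> A\<close> in blast)
qed

lemma I_u_UN_finite:
  assumes I: "ideal_on I" and "finite J" and "\<And>j. j \<in> J \<Longrightarrow> I_u I (X j) f"
  shows "I_u I (\<Union>j\<in>J. X j) f"
  using assms(2,3)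
proof (induction J rule: finite_induct)
  case empty
  show ?case
    unfolding I_u_def using ideal_on_finite[OF I, of "{}"] by simp
next
  case (insert j J)
  have "{n. \<exists>x\<in>X j \<union> (\<Union>i\<in>J. X i). \<bar>f n x\<bar> \<ge> \<epsilon>}
      = {n. \<exists>x\<in>X j. \<bar>f n x\<bar> \<ge> \<epsilon>} \<union> {n. \<exists>x\<in>\<Union>i\<in>J. X i. \<bar>f n x\<bar> \<ge> \<epsilon>}" for \<epsilon>
    by blast
  then show ?case
    using insert ideal_on_Un[OF I] unfolding I_u_def by simp
qed

lemma obtain_I_conv0_thresholds:
  assumes I: "ideal_on I" and B: "\<And>m. B m \<in> I"
  obtains e :: "nat \<Rightarrow> real"
  where "\<And>n. e n > 0" "I_conv0 I e"
    "\<And>k n. k \<le> n \<Longrightarrow> n \<notin> B k \<Longrightarrow> \<exists>m\<ge>k. n \<notin> B m \<and> e n = inverse (real (Suc m))"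
proof
  \<comment> \<open>If no \<open>m \<le> n\<close> has \<open>n \<notin> B m\<close>, GREATEST yields a junk value; only \<open>e n > 0\<close> is needed then.\<close>
  define e where "e n = inverse (real (Suc (GREATEST m. m \<le> n \<and> n \<notin> B m)))" for n
  show "e n > 0" for n
    unfolding e_def by simp
  show below: "\<exists>m\<ge>k. n \<notin> B m \<and> e n = inverse (real (Suc m))" if "k \<le> n" "n \<notin> B k" for k n
  proof -
    let ?P = "\<lambda>m. m \<le> n \<and> n \<notin> B m"
    have "?P (Greatest ?P)" "k \<le> Greatest ?P"
      using GreatestI_nat[of ?P k n] Greatest_le_nat[of ?P k n] that by auto
    then show ?thesis
      unfolding e_def by blast
  qed
  show "I_conv0 I e"
    unfolding I_conv0_def
  proof (intro allI impI)
    fix \<epsilon> :: real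
    assume "\<epsilon> > 0"
    then obtain M where M: "inverse (real (Suc M)) < \<epsilon>"
      using reals_Archimedean by blast
    have "{n. \<bar>e n\<bar> \<ge> \<epsilon>} \<subseteq> B M \<union> {..<M}"
    proof (rule subsetI, rule ccontr)
      fix n
      assume n: "n \<in> {n. \<bar>e n\<bar> \<ge> \<epsilon>}" and "n \<notin> B M \<union> {..<M}"
      then obtain m where "M \<le> m" and e_n: "e n = inverse (real (Suc m))"
        using below[of M n] by auto
      then have "inverse (real (Suc m)) \<le> inverse (real (Suc M))"
        by (intro le_imp_inverse_le) auto
      moreover have "\<epsilon> \<le> inverse (real (Suc m))"
        using n e_n by simp
      ultimately show False
        using M by linarith
    qed
    then show "{n. \<bar>e n\<bar> \<ge> \<epsilon>} \<in> I"
      by (rule ideal_on_subset_Un_finite[OF I B finite_lessThan])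
  qed
qed

lemma I_sigma_u_imp_I_qn:
  assumes I: "ideal_on I" and "I_sigma_u I S f"
  shows "I_qn I S f"
proof -
  obtain X :: "nat \<Rightarrow> 'a set" where S: "S = (\<Union>k. X k)" and X: "\<And>k. I_u I (X k) f"
    using assms(2) unfolding I_sigma_u_def by blast
  define B where "B m = {n. \<exists>x\<in>(\<Union>j\<le>m. X j). \<bar>f n x\<bar> \<ge> inverse (real (Suc m))}" for m
  have B_in_I: "B m \<in> I" for m
    using I_u_UN_finite[OF I, of "{..m}" X f] X unfolding I_u_def B_def by simp
  obtain e where e: "\<And>n. e n > 0" "I_conv0 I e"
    and below: "\<And>k n. k \<le> n \<Longrightarrow> n \<notin> B k \<Longrightarrow> \<exists>m\<ge>k. n \<notin> B m \<and> e n = inverse (real (Suc m))"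
    using obtain_I_conv0_thresholds[where B = B, OF I B_in_I] by blast
  have "{n. \<bar>f n x\<bar> \<ge> e n} \<in> I" if "x \<in> X k" for x k
  proof -
    have "{n. \<bar>f n x\<bar> \<ge> e n} \<subseteq> B k \<union> {..<k}"
    proof (rule subsetI, rule ccontr)
      fix n
      assume n: "n \<in> {n. \<bar>f n x\<bar> \<ge> e n}" and "n \<notin> B k \<union> {..<k}"
      then obtain m where "k \<le> m" and "n \<notin> B m" and e_n: "e n = inverse (real (Suc m))"
        using below[of k n] by auto
      have "x \<in> (\<Union>j\<le>m. X j)"
        using that \<open>k \<le> m\<close> by blast
      then have "n \<in> B m" if "inverse (real (Suc m)) \<le> \<bar>f n x\<bar>"
        unfolding B_def using that by blast
      with \<open>n \<notin> B m\<close> n e_n show False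
        by auto
    qed
    then show ?thesis
      by (rule ideal_on_subset_Un_finite[OF I B_in_I finite_lessThan])
  qed
  then show ?thesis
    unfolding I_qn_def using S e by blast
qed

lemma I_p_imp_I_u_if_identical:
  assumes I: "ideal_on I" and "I_p I A f" and same: "\<And>x y n. x \<in> A \<Longrightarrow> y \<in> A \<Longrightarrow> f n x = f n y"
  shows "I_u I A f"
  unfolding I_u_def
proof (intro allI impI)
  fix \<epsilon> :: real
  assume "\<epsilon> > 0"
  show "{n. \<exists>x\<in>A. \<bar>f n x\<bar> \<ge> \<epsilon>} \<in> I"
  proof (cases "A = {}")
    case True
    then show ?thesis
      using ideal_on_finite[OF I, of "{}"] by simp
  next
    case False
    then obtain y where "y \<in> A"
      by blast
    then have "{n. \<bar>f n y\<bar> \<ge> \<epsilon>} \<in> I"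
      using assms(2) \<open>\<epsilon> > 0\<close> unfolding I_p_def I_conv0_def by blast
    moreover have "{n. \<exists>x\<in>A. \<bar>f n x\<bar> \<ge> \<epsilon>} \<subseteq> {n. \<bar>f n y\<bar> \<ge> \<epsilon>}"
    proof
      fix n
      assume "n \<in> {n. \<exists>x\<in>A. \<bar>f n x\<bar> \<ge> \<epsilon>}"
      then obtain x where "x \<in> A" "\<bar>f n x\<bar> \<ge> \<epsilon>"
        by blast
      then show "n \<in> {n. \<bar>f n y\<bar> \<ge> \<epsilon>}"
        using same[of x y n] \<open>y \<in> A\<close> by simp
    qed
    ultimately show ?thesis
      by (rule ideal_on_subset[OF I])
  qed
qed

lemma I_sigma_uI_countable:
  assumes I: "ideal_on I" and "countable \<X>" and "\<And>A. A \<in> \<X> \<Longrightarrow> I_u I A f"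
  shows "I_sigma_u I (\<Union>\<X>) f"
proof -
  \<comment> \<open>Inserting \<open>{}\<close> makes the family nonempty, so that \<open>from_nat_into\<close> enumerates it.\<close>
  let ?X = "from_nat_into (insert {} \<X>)"
  have "range ?X = insert {} \<X>"
    using assms(2) by simp
  then have "\<Union>\<X> = (\<Union>k. ?X k)"
    by simp
  moreover have "I_u I (?X k) f" for k
    using from_nat_into[of "insert {} \<X>" k] assms(3) ideal_on_finite[OF I, of "{}"]
    unfolding I_u_def by auto
  ultimately show ?thesis
    unfolding I_sigma_u_def by blast
qed

lemma I_p_imp_I_sigma_u_if_countable_exceptions:
  assumes I: "ideal_on I" and "I_p I S f" and countable: "countable {x\<in>S. \<exists>n. f n x \<noteq> f n p}"
  shows "I_sigma_u I S f"
proof -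
  define D where "D = {x\<in>S. \<exists>n. f n x \<noteq> f n p}"
  let ?\<X> = "insert (S - D) ((\<lambda>x. {x}) ` D)"
  have "D \<subseteq> S"
    unfolding D_def by blast
  then have S_eq: "S = \<Union>?\<X>"
    by auto
  have "countable ?\<X>"
    using countable unfolding D_def by simp
  moreover have "I_u I A f" if A: "A \<in> ?\<X>" for A
  proof (rule I_p_imp_I_u_if_identical[OF I])
    have "A \<subseteq> S"
      using A unfolding D_def by blast
    then show "I_p I A f"
      using assms(2) unfolding I_p_def by blast
    show "f n x = f n y" if "x \<in> A" "y \<in> A" for x y n
      using that A unfolding D_def by auto
  qed
  ultimately show ?thesis
    by (subst S_eq) (rule I_sigma_uI_countable[OF I])
qed

lemma in_classes_if_I_p_imp_I_sigma_u:
  assumes I: "ideal_on I" and "normal_T2 X"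
    and p_imp_su: "\<And>f. (\<forall>n. continuous_map X euclideanreal (f n)) \<Longrightarrow> I_p I (topspace X) f
                       \<Longrightarrow> I_sigma_u I (topspace X) f"
  shows "in_class I_p I_sigma_u I X \<and> in_class I_p I_qn I X \<and> in_class I_qn I_sigma_u I X"
proof -
  have "I_p I (topspace X) f \<longleftrightarrow> I_sigma_u I (topspace X) f"
    and "I_qn I (topspace X) f \<longleftrightarrow> I_sigma_u I (topspace X) f"
    if "\<forall>n. continuous_map X euclideanreal (f n)" for f
    using p_imp_su[OF that] I_qn_imp_I_p[OF I] I_sigma_u_imp_I_p[OF I] I_sigma_u_imp_I_qn[OF I]
    by blast+
  then show ?thesis
    unfolding in_class_def using assms(2) by simp
qed

definition point_cocountable_topology :: "'a set \<Rightarrow> 'a \<Rightarrow> 'a topology" where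
  "point_cocountable_topology K p = topology (\<lambda>U. U \<subseteq> K \<and> (p \<in> U \<longrightarrow> countable (K - U)))"

lemma openin_point_cocountable_topology:
  "openin (point_cocountable_topology K p) U \<longleftrightarrow> U \<subseteq> K \<and> (p \<in> U \<longrightarrow> countable (K - U))"
proof -
  have "istopology (\<lambda>U. U \<subseteq> K \<and> (p \<in> U \<longrightarrow> countable (K - U)))"
    unfolding istopology_def
  proof (rule conjI; intro allI impI)
    fix S T
    assume "S \<subseteq> K \<and> (p \<in> S \<longrightarrow> countable (K - S))" "T \<subseteq> K \<and> (p \<in> T \<longrightarrow> countable (K - T))"
    moreover have "K - S \<inter> T = (K - S) \<union> (K - T)"
      by blast
    ultimately show "S \<inter> T \<subseteq> K \<and> (p \<in> S \<inter> T \<longrightarrow> countable (K - S \<inter> T))"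
      by (metis IntD1 IntD2 countable_Un le_infI1)
  next
    fix \<U>
    assume \<U>: "\<forall>U\<in>\<U>. U \<subseteq> K \<and> (p \<in> U \<longrightarrow> countable (K - U))"
    show "\<Union>\<U> \<subseteq> K \<and> (p \<in> \<Union>\<U> \<longrightarrow> countable (K - \<Union>\<U>))"
    proof (intro conjI impI)
      show "\<Union>\<U> \<subseteq> K"
        using \<U> by blast
      assume "p \<in> \<Union>\<U>"
      then obtain U where "U \<in> \<U>" "p \<in> U"
        by blast
      then have "countable (K - U)"
        using \<U> by blast
      moreover have "K - \<Union>\<U> \<subseteq> K - U"
        using \<open>U \<in> \<U>\<close> by blast
      ultimately show "countable (K - \<Union>\<U>)"
        by (rule countable_subset[rotated])
    qed
  qed
  then show ?thesis
    unfolding point_cocountable_topology_def by simp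
qed

lemma topspace_point_cocountable_topology: "topspace (point_cocountable_topology K p) = K"
proof -
  have "openin (point_cocountable_topology K p) K"
    by (simp add: openin_point_cocountable_topology)
  then show ?thesis
    using openin_subset[of "point_cocountable_topology K p"]
    by (metis openin_point_cocountable_topology openin_topspace subset_antisym)
qed

lemma normal_T2_point_cocountable_topology: "normal_T2 (point_cocountable_topology K p)"
proof -
  let ?X = "point_cocountable_topology K p"
  have separate: "\<exists>U V. openin ?X U \<and> openin ?X V \<and> S \<subseteq> U \<and> T \<subseteq> V \<and> disjnt U V"
    if S: "closedin ?X S" and T: "closedin ?X T" and "disjnt S T" "p \<notin> S" for S T
  proof (intro exI conjI)
    show "openin ?X S"
      using closedin_subset[OF S] \<open>p \<notin> S\<close>
      by (simp add: openin_point_cocountable_topology topspace_point_cocountable_topology)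
    show "openin ?X (K - S)"
      using S unfolding closedin_def topspace_point_cocountable_topology by blast
    show "T \<subseteq> K - S"
      using closedin_subset[OF T] \<open>disjnt S T\<close>
      by (auto simp: topspace_point_cocountable_topology disjnt_def)
  qed (auto simp: disjnt_def)
  have "normal_space ?X"
    unfolding normal_space_def
  proof (intro allI impI)
    fix S T
    assume ST: "closedin ?X S \<and> closedin ?X T \<and> disjnt S T"
    then consider "p \<notin> S" | "p \<notin> T"
      by (auto simp: disjnt_def)
    then show "\<exists>U V. openin ?X U \<and> openin ?X V \<and> S \<subseteq> U \<and> T \<subseteq> V \<and> disjnt U V"
    proof cases
      case 1
      then show ?thesis
        using separate ST by blast
    next
      case 2
      then show ?thesis
        using separate[of T S] ST disjnt_sym by blast
    qed
  qed
  moreover have "closedin ?X {x}" if "x \<in> K" for x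
  proof -
    have "K - (K - {x}) = {x}"
      using that by blast
    then show ?thesis
      using that unfolding closedin_def
      by (simp add: openin_point_cocountable_topology topspace_point_cocountable_topology)
  qed
  then have "t1_space ?X"
    unfolding t1_space_closedin_singleton topspace_point_cocountable_topology by blast
  ultimately show ?thesis
    unfolding normal_T2_def using normal_t1_imp_Hausdorff_space by blast
qed

lemma countable_nonconstant_continuous_map_point_cocountable:
  assumes g: "continuous_map (point_cocountable_topology K p) euclideanreal g" and "p \<in> K"
  shows "countable {x\<in>K. g x \<noteq> g p}"
proof -
  let ?V = "\<lambda>m. {x\<in>K. g x \<in> ball (g p) (inverse (real (Suc m)))}"
  have "g x = g p" if "\<And>m. g x \<in> ball (g p) (inverse (real (Suc m)))" for x
  proof (rule ccontr)
    assume "g x \<noteq> g p"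
    then obtain m where "inverse (real (Suc m)) < dist (g p) (g x)"
      using reals_Archimedean[of "dist (g p) (g x)"] by auto
    with that[of m] show False
      by simp
  qed
  then have "{x\<in>K. g x \<noteq> g p} = (\<Union>m. K - ?V m)"
    by auto
  moreover have "countable (K - ?V m)" for m
    using openin_continuous_map_preimage[OF g, of "ball (g p) (inverse (real (Suc m)))"] \<open>p \<in> K\<close>
    by (simp add: openin_point_cocountable_topology topspace_point_cocountable_topology)
  moreover have "countable (\<Union>m. K - ?V m)"
    using calculation(2) by (intro countable_UN) auto
  ultimately show ?thesis
    by (simp only:)
qed

lemma I_p_imp_I_sigma_u_point_cocountable_topology:
  assumes I: "ideal_on I" and p: "K = {} \<or> p \<in> K"
    and cont: "\<forall>n. continuous_map (point_cocountable_topology K p) euclideanreal (f n)"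
    and "I_p I (topspace (point_cocountable_topology K p)) f"
  shows "I_sigma_u I (topspace (point_cocountable_topology K p)) f"
  unfolding topspace_point_cocountable_topology
proof (rule I_p_imp_I_sigma_u_if_countable_exceptions[OF I])
  show "I_p I K f"
    using assms(4) by (simp add: topspace_point_cocountable_topology)
  have "countable {x\<in>K. f n x \<noteq> f n p}" for n
    using p cont countable_nonconstant_continuous_map_point_cocountable[of K p "f n"] by auto
  then have "countable (\<Union>n. {x\<in>K. f n x \<noteq> f n p})"
    by (intro countable_UN) auto
  moreover have "{x\<in>K. \<exists>n. f n x \<noteq> f n p} = (\<Union>n. {x\<in>K. f n x \<noteq> f n p})"
    by blast
  ultimately show "countable {x\<in>K. \<exists>n. f n x \<noteq> f n p}"
    by (simp only:)
qed

theorem corollary6p5: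
  fixes I :: "nat set set" and K :: "'a set"
  assumes "ideal_on I"
  shows "(\<exists>X :: 'a topology. topspace X \<approx> K \<and> in_class I_p I_sigma_u I X)
       \<and> (\<exists>X :: 'a topology. topspace X \<approx> K \<and> in_class I_p I_qn I X)
       \<and> (\<exists>X :: 'a topology. topspace X \<approx> K \<and> in_class I_qn I_sigma_u I X)"
proof -
  obtain p where p: "K = {} \<or> p \<in> K"
    by blast
  let ?X = "point_cocountable_topology K p"
  have "in_class I_p I_sigma_u I ?X \<and> in_class I_p I_qn I ?X \<and> in_class I_qn I_sigma_u I ?X"
    by (rule in_classes_if_I_p_imp_I_sigma_u[OF assms normal_T2_point_cocountable_topology
          I_p_imp_I_sigma_u_point_cocountable_topology[OF assms p]])
  moreover have "topspace ?X \<approx> K"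
    by (simp add: topspace_point_cocountable_topology eqpoll_refl)
  ultimately show ?thesis
    by blast
qed

end
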